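(* Let $\mathcal{D}$ be a finite nonempty set of disks in the plane with positive radii, and let $\delta^*$ be the minimum value $\delta\ge0$ for which there exist two points $p_1,p_2\in\mathbb{R}^2$ with $D(\delta)\cap\{p_1,p_2\}\neq\emptyset$ for every $D\in\mathcal{D}$. Let $p_1,p_2$ be two points with $D(\delta^* )\cap\{p_1,p_2\}\neq\emptyset$ for every $D\in\mathcal{D}$. Then $\delta^*=0$, or one of $p_1,p_2$ is a common boundary point of three $\delta^*$-inflated disks $D(\delta^* )$, $D\in\mathcal{D}$, or one of $p_1,p_2$ is a tangent point of two $\delta^*$-inflated disks.
   Context: For a disk $D$ with center $c(D)$ and radius $r(D)$ and a real $\delta\ge0$, the $\delta$-inflated disk $D(\delta)$ is the closed disk with center $c(D)$ and radius $r(D)+\delta$. A tangent point of two disks is a point where their boundary circles touch (the disks intersect in exactly that point). The paper assumes throughout that no disk of $\mathcal{D}$ contains another disk of $\mathcal{D}$. *)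

theory Defs
  imports "HOL-Analysis.Analysis"
begin

text \<open>A disk in the plane is represented by the pair (center, radius).\<close>
type_synonym disk = "(real^2) \<times> real"

definition center :: "disk \<Rightarrow> real^2" where "center D = fst D"
definition radius :: "disk \<Rightarrow> real" where "radius D = snd D"

definition disk_set :: "disk \<Rightarrow> (real^2) set" where
  "disk_set D = cball (center D) (radius D)"

definition inflated :: "disk \<Rightarrow> real \<Rightarrow> (real^2) set" where
  "inflated D \<delta> = cball (center D) (radius D + \<delta>)"

definition inflated_circle :: "disk \<Rightarrow> real \<Rightarrow> (real^2) set" where
  "inflated_circle D \<delta> = sphere (center D) (radius D + \<delta>)"

definition stabs :: "disk set \<Rightarrow> real \<Rightarrow> real^2 \<Rightarrow> real^2 \<Rightarrow> bool" where
  "stabs \<D> \<delta> p1 p2 \<longleftrightarrow> (\<forall>D\<in>\<D>. inflated D \<delta> \<inter> {p1, p2} \<noteq> {})"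

definition tangent_point :: "(real^2) set \<Rightarrow> (real^2) set \<Rightarrow> real^2 \<Rightarrow> bool" where
  "tangent_point A B p \<longleftrightarrow> A \<inter> B = {p}"

end

theory Submission
  imports Defs
begin

text \<open>Suppose \<open>\<delta>* > 0\<close> and neither \<open>p\<^sub>1\<close> nor \<open>p\<^sub>2\<close> is a common boundary point of three
inflated disks or a tangent point of two. Then at most two inflated disks through \<open>p\<^sub>i\<close> have
\<open>p\<^sub>i\<close> on their boundary, and these share some second point \<open>q \<noteq> p\<^sub>i\<close>. Moving from \<open>p\<^sub>i\<close>
a little towards \<open>q\<close> enters the interior of these disks by strict convexity of balls, and stays
inside the other disks containing \<open>p\<^sub>i\<close>, whose interiors are open. The two points so obtained lie
in the interior of every inflated disk, and since the family is finite they still stab a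
slightly smaller inflation, contradicting the minimality of \<open>\<delta>*\<close>.\<close>

lemma exists_point_in_balls_towards:
  fixes c :: "'i \<Rightarrow> 'a::euclidean_space" and r :: "'i \<Rightarrow> real"
  assumes "finite I"
    and p_in: "\<forall>i\<in>I. p \<in> cball (c i) (r i)"
    and "q \<noteq> p"
    and q_in: "\<forall>i\<in>I. p \<in> sphere (c i) (r i) \<longrightarrow> q \<in> cball (c i) (r i)"
  shows "\<exists>x. \<forall>i\<in>I. x \<in> ball (c i) (r i)"
proof -
  define x where "x t = (1 - t) *\<^sub>R p + t *\<^sub>R q" for t
  have "\<forall>\<^sub>F t in at_right 0. x t \<in> ball (c i) (r i)" if i: "i \<in> I" for i
  proof (cases "p \<in> sphere (c i) (r i)")
    case True
    have "x t \<in> ball (c i) (r i)" if "t \<in> {0<..<1}" for t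
    proof -
      have "x t \<in> open_segment p q"
        using that \<open>q \<noteq> p\<close> by (auto simp: in_segment x_def)
      then have "dist (c i) (x t) < dist (c i) p \<or> dist (c i) (x t) < dist (c i) q"
        by (rule dist_decreases_open_segment)
      then show ?thesis
        using True q_in i by auto
    qed
    then show ?thesis
      using eventually_at_right_real[of 0 1] by (auto elim: eventually_mono)
  next
    case False
    then have "dist (c i) p < r i"
      using p_in i by auto
    moreover have "((\<lambda>t. dist (c i) (x t)) \<longlongrightarrow> dist (c i) p) (at_right 0)"
      unfolding x_def by (auto intro!: tendsto_eq_intros)
    ultimately show ?thesis
      by (auto dest: order_tendstoD(2))
  qed
  then have "\<forall>\<^sub>F t in at_right 0. \<forall>i\<in>I. x t \<in> ball (c i) (r i)"
    using \<open>finite I\<close> by (simp add: eventually_ball_finite)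
  then show ?thesis
    using trivial_limit_at_right_real by (blast dest: eventually_happens)
qed

lemma exists_interior_point_of_inflated_disks:
  fixes \<D> :: "disk set" and \<delta> :: real and p :: "real^2"
  assumes "finite \<D>"
    and pos: "\<forall>D\<in>\<D>. radius D + \<delta> > 0"
    and no_triple: "\<not> (\<exists>D1\<in>\<D>. \<exists>D2\<in>\<D>. \<exists>D3\<in>\<D>.
          D1 \<noteq> D2 \<and> D1 \<noteq> D3 \<and> D2 \<noteq> D3 \<and>
          p \<in> inflated_circle D1 \<delta> \<and> p \<in> inflated_circle D2 \<delta> \<and> p \<in> inflated_circle D3 \<delta>)"
    and no_tangent: "\<not> (\<exists>D1\<in>\<D>. \<exists>D2\<in>\<D>. D1 \<noteq> D2 \<and> tangent_point (inflated D1 \<delta>) (inflated D2 \<delta>) p)"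
  shows "\<exists>q. \<forall>D\<in>\<D>. p \<in> inflated D \<delta> \<longrightarrow> q \<in> ball (center D) (radius D + \<delta>)"
proof -
  define A where "A = {D\<in>\<D>. p \<in> inflated_circle D \<delta>}"
  have circle_in: "p \<in> inflated D \<delta>" if "D \<in> A" for D
    using that by (simp add: A_def inflated_def inflated_circle_def)
  \<comment> \<open>\<open>q\<close> is any other point, the centre, or the second common point, according as
      zero, one or two inflated circles pass through \<open>p\<close>.\<close>
  obtain q where "q \<noteq> p" and q_in: "\<forall>D\<in>A. q \<in> inflated D \<delta>"
  proof (cases "A = {}")
    case True
    have "p + axis 1 1 \<noteq> p"
      by (simp add: axis_eq_0_iff)
    with True that show ?thesis by blast
  next
    case False
    then obtain D1 where D1: "D1 \<in> A" by blast
    show ?thesis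
    proof (cases "A = {D1}")
      case True
      have "center D1 \<noteq> p" "center D1 \<in> inflated D1 \<delta>"
        using D1 pos by (auto simp: A_def inflated_def inflated_circle_def)
      with True that show ?thesis by blast
    next
      case False
      then obtain D2 where D2: "D2 \<in> A" "D2 \<noteq> D1"
        using D1 by blast
      have "A = {D1, D2}"
        using no_triple D1 D2 by (auto simp: A_def)
      moreover have "p \<in> inflated D1 \<delta> \<inter> inflated D2 \<delta>"
        using D1 D2 circle_in by blast
      moreover have "\<not> tangent_point (inflated D1 \<delta>) (inflated D2 \<delta>) p"
        using no_tangent D1 D2 by (auto simp: A_def)
      ultimately show ?thesis
        using that unfolding tangent_point_def by blast
    qed
  qed
  have "\<exists>x. \<forall>D\<in>{D\<in>\<D>. p \<in> inflated D \<delta>}. x \<in> ball (center D) (radius D + \<delta>)"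
  proof (rule exists_point_in_balls_towards[where c = center and r = "\<lambda>D. radius D + \<delta>"])
    show "\<forall>D\<in>{D\<in>\<D>. p \<in> inflated D \<delta>}. p \<in> cball (center D) (radius D + \<delta>)"
      by (simp add: inflated_def)
    show "\<forall>D\<in>{D\<in>\<D>. p \<in> inflated D \<delta>}.
        p \<in> sphere (center D) (radius D + \<delta>) \<longrightarrow> q \<in> cball (center D) (radius D + \<delta>)"
      using q_in unfolding A_def inflated_def inflated_circle_def by blast
  qed (use \<open>finite \<D>\<close> \<open>q \<noteq> p\<close> in auto)
  then show ?thesis
    by blast
qed

lemma stabs_smaller_inflation:
  fixes \<D> :: "disk set" and \<delta> :: real and q1 q2 :: "real^2"
  assumes "finite \<D>" "\<delta> > 0"
    and interior: "\<forall>D\<in>\<D>. q1 \<in> ball (center D) (radius D + \<delta>) \<or> q2 \<in> ball (center D) (radius D + \<delta>)"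
  shows "\<exists>\<delta>'. 0 \<le> \<delta>' \<and> \<delta>' < \<delta> \<and> stabs \<D> \<delta>' q1 q2"
proof -
  have "\<forall>\<^sub>F \<delta>' in at_left \<delta>. \<forall>D\<in>\<D>. inflated D \<delta>' \<inter> {q1, q2} \<noteq> {}"
  proof (rule eventually_ball_finite[OF \<open>finite \<D>\<close>], rule ballI)
    fix D assume "D \<in> \<D>"
    then obtain q where "q \<in> {q1, q2}" "q \<in> ball (center D) (radius D + \<delta>)"
      using interior by blast
    then have "dist (center D) q - radius D < \<delta>"
      by simp
    then have "\<forall>\<^sub>F \<delta>' in at_left \<delta>. q \<in> inflated D \<delta>'"
      using order_tendstoD(1)[OF tendsto_ident_at]
      by (fastforce simp: inflated_def elim: eventually_mono)
    then show "\<forall>\<^sub>F \<delta>' in at_left \<delta>. inflated D \<delta>' \<inter> {q1, q2} \<noteq> {}"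
      using \<open>q \<in> {q1, q2}\<close> by (auto elim: eventually_mono)
  qed
  then have "\<forall>\<^sub>F \<delta>' in at_left \<delta>. 0 \<le> \<delta>' \<and> \<delta>' < \<delta> \<and> stabs \<D> \<delta>' q1 q2"
    using eventually_at_left_real[OF \<open>\<delta> > 0\<close>]
    by eventually_elim (auto simp: stabs_def)
  then show ?thesis
    using trivial_limit_at_left_real by (blast dest: eventually_happens)
qed

theorem lemma2:
  fixes \<D> :: "disk set" and \<delta>s :: real and p1 p2 :: "real^2"
  assumes fin: "finite \<D>" and ne: "\<D> \<noteq> {}"
    and pos: "\<forall>D\<in>\<D>. radius D > 0"
    and no_contain: "\<forall>D\<in>\<D>. \<forall>D'\<in>\<D>. D \<noteq> D' \<longrightarrow> \<not> (disk_set D \<subseteq> disk_set D')"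
    and min_feas: "\<delta>s \<ge> 0" "\<exists>q1 q2. stabs \<D> \<delta>s q1 q2"
    and min_least: "\<forall>\<delta>\<ge>0. (\<exists>q1 q2. stabs \<D> \<delta> q1 q2) \<longrightarrow> \<delta>s \<le> \<delta>"
    and p_stab: "stabs \<D> \<delta>s p1 p2"
  shows "\<delta>s = 0
    \<or> (\<exists>p\<in>{p1, p2}. \<exists>D1\<in>\<D>. \<exists>D2\<in>\<D>. \<exists>D3\<in>\<D>.
          D1 \<noteq> D2 \<and> D1 \<noteq> D3 \<and> D2 \<noteq> D3 \<and>
          p \<in> inflated_circle D1 \<delta>s \<and> p \<in> inflated_circle D2 \<delta>s \<and> p \<in> inflated_circle D3 \<delta>s)
    \<or> (\<exists>p\<in>{p1, p2}. \<exists>D1\<in>\<D>. \<exists>D2\<in>\<D>.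
          D1 \<noteq> D2 \<and> tangent_point (inflated D1 \<delta>s) (inflated D2 \<delta>s) p)"
proof (rule ccontr)
  assume "\<not> ?thesis" (is "\<not> (_ \<or> ?triple \<or> ?tangent)")
  then have "\<delta>s \<noteq> 0" and triple_free: "\<not> ?triple" and tangent_free: "\<not> ?tangent"
    by (simp_all only: de_Morgan_disj not_False_eq_True)
  with min_feas(1) have "\<delta>s > 0"
    by simp
  have interior_point: "\<exists>q. \<forall>D\<in>\<D>. p \<in> inflated D \<delta>s \<longrightarrow> q \<in> ball (center D) (radius D + \<delta>s)"
    if "p \<in> {p1, p2}" for p
  proof (rule exists_interior_point_of_inflated_disks[OF fin])
    show "\<forall>D\<in>\<D>. radius D + \<delta>s > 0"
      using pos \<open>\<delta>s > 0\<close> by (simp add: add_pos_pos)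
  qed (use that triple_free tangent_free in blast)+
  obtain q1 where q1: "\<forall>D\<in>\<D>. p1 \<in> inflated D \<delta>s \<longrightarrow> q1 \<in> ball (center D) (radius D + \<delta>s)"
    using interior_point[of p1] by blast
  obtain q2 where q2: "\<forall>D\<in>\<D>. p2 \<in> inflated D \<delta>s \<longrightarrow> q2 \<in> ball (center D) (radius D + \<delta>s)"
    using interior_point[of p2] by blast
  have "\<forall>D\<in>\<D>. q1 \<in> ball (center D) (radius D + \<delta>s) \<or> q2 \<in> ball (center D) (radius D + \<delta>s)"
    using p_stab q1 q2 unfolding stabs_def by blast
  then obtain \<delta>' where "0 \<le> \<delta>'" "\<delta>' < \<delta>s" "stabs \<D> \<delta>' q1 q2"
    using stabs_smaller_inflation[OF fin \<open>\<delta>s > 0\<close>] by blast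
  with min_least show False
    by fastforce
qed

end
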